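(* Let $K$ be an almost real closed field and let $p$ be a prime. Consider the formulae in the language of rings $\{+,\cdot\}$ (with constants $0,1$) \[\psi_p(x) := \big[\neg\exists y\colon (y^p = x \vee y^p = -x)\big] \wedge \big[\exists z\colon z^p = 1+x\big],\] \[\varphi_p(x) := \psi_p(x) \vee \big[\exists y\colon (y^p = x \vee y^p = -x) \wedge (\forall z\colon \psi_p(z) \rightarrow \psi_p(xz))\big] \vee x = 0.\] Then $\varphi_p(K) = \mathcal O_{v_p}$; in particular the valuation $v_p$ is definable in $(K,+,\cdot)$ (even without parameters).
   Context: A field $K$ is almost real closed if it admits a henselian valuation whose residue field is real closed; such a field is formally real. On a formally real field the henselian valuations are linearly ordered by inclusion of valuation rings, and the canonical henselian valuation $v_K$ is the finest one (its valuation ring is the smallest). Write $G := v_K(K^\times)$, an ordered abelian group written additively. For a convex subgroup $\Delta\subseteq G$ let $v_\Delta$ be the coarsening of $v_K$ given by $a\mapsto v_K(a)+\Delta \in G/\Delta$; every $v_\Delta$ is henselian and $\Delta\mapsto v_\Delta$ is a bijection between convex subgroups of $G$ and henselian valuations on $K$. For a prime $p$, $G_p$ denotes the maximal convex $p$-divisible subgroup of $G$, and $v_p := v_{G_p}$. $\mathcal O_v$ denotes the valuation ring of a valuation $v$. *)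

theory Defs
  imports "HOL-Computational_Algebra.Polynomial"
begin

definition is_valuation_ring :: "'a::field set \<Rightarrow> bool" where
  "is_valuation_ring R \<longleftrightarrow>
     0 \<in> R \<and> 1 \<in> R \<and>
     (\<forall>x\<in>R. \<forall>y\<in>R. x + y \<in> R \<and> x * y \<in> R \<and> - x \<in> R) \<and>
     (\<forall>x. x \<noteq> 0 \<longrightarrow> x \<in> R \<or> inverse x \<in> R)"

definition max_ideal :: "'a::field set \<Rightarrow> 'a set" where
  "max_ideal R = {x \<in> R. x = 0 \<or> inverse x \<notin> R}"

definition henselian :: "'a::field set \<Rightarrow> bool" where
  "henselian R \<longleftrightarrow> is_valuation_ring R \<and>
     (\<forall>f a. (\<forall>i. coeff f i \<in> R) \<longrightarrow> lead_coeff f = 1 \<longrightarrow> a \<in> R \<longrightarrow>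
        poly f a \<in> max_ideal R \<longrightarrow> poly (pderiv f) a \<notin> max_ideal R \<longrightarrow>
        (\<exists>b\<in>R. poly f b = 0 \<and> b - a \<in> max_ideal R))"

text \<open>The residue field R/m is real closed: it is formally real (-1 is not a sum of squares),
  for every element x either x or -x is a square, and every odd-degree polynomial has a root.\<close>
definition residue_real_closed :: "'a::field set \<Rightarrow> bool" where
  "residue_real_closed R \<longleftrightarrow>
     (\<forall>(n::nat) (g::nat \<Rightarrow> 'a). (\<forall>i<n. g i \<in> R) \<longrightarrow> (\<Sum>i<n. (g i)^2) \<in> max_ideal R
          \<longrightarrow> (\<forall>i<n. g i \<in> max_ideal R)) \<and>
     (\<forall>x\<in>R. \<exists>y\<in>R. y^2 - x \<in> max_ideal R \<or> y^2 + x \<in> max_ideal R) \<and>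
     (\<forall>f. (\<forall>i. coeff f i \<in> R) \<longrightarrow> lead_coeff f = 1 \<longrightarrow> odd (degree f) \<longrightarrow>
          (\<exists>a\<in>R. poly f a \<in> max_ideal R))"

definition almost_real_closed :: "'a::field itself \<Rightarrow> bool" where
  "almost_real_closed _ \<longleftrightarrow> (\<exists>R::'a set. henselian R \<and> residue_real_closed R)"

definition canonical_henselian_ring :: "'a::field set \<Rightarrow> bool" where
  "canonical_henselian_ring R \<longleftrightarrow> henselian R \<and>
     (\<forall>R'. henselian R' \<longrightarrow> R \<subseteq> R')"

definition valuation :: "('a::field \<Rightarrow> 'g::linordered_ab_group_add) \<Rightarrow> bool" where
  "valuation v \<longleftrightarrow>
     (\<forall>x y. x \<noteq> 0 \<longrightarrow> y \<noteq> 0 \<longrightarrow> v (x * y) = v x + v y) \<and>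
     (\<forall>x y. x \<noteq> 0 \<longrightarrow> y \<noteq> 0 \<longrightarrow> x + y \<noteq> 0 \<longrightarrow> min (v x) (v y) \<le> v (x + y))"

definition val_ring :: "('a::field \<Rightarrow> 'g::linordered_ab_group_add) \<Rightarrow> 'a set" where
  "val_ring v = {x. x = 0 \<or> 0 \<le> v x}"

definition value_group :: "('a::field \<Rightarrow> 'g::linordered_ab_group_add) \<Rightarrow> 'g set" where
  "value_group v = v ` {x. x \<noteq> 0}"

definition nsmul :: "nat \<Rightarrow> 'g::ab_group_add \<Rightarrow> 'g" where
  "nsmul n b = (((+) b) ^^ n) 0"

definition convex_subgroup :: "'g::linordered_ab_group_add set \<Rightarrow> 'g set \<Rightarrow> bool" where
  "convex_subgroup G D \<longleftrightarrow> D \<subseteq> G \<and> 0 \<in> D \<and>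
     (\<forall>a\<in>D. \<forall>b\<in>D. a + b \<in> D \<and> - a \<in> D) \<and>
     (\<forall>a\<in>D. \<forall>g\<in>G. 0 \<le> g \<and> g \<le> a \<longrightarrow> g \<in> D)"

definition p_divisible :: "nat \<Rightarrow> 'g::ab_group_add set \<Rightarrow> bool" where
  "p_divisible p D \<longleftrightarrow> (\<forall>a\<in>D. \<exists>b\<in>D. nsmul p b = a)"

text \<open>Maximal convex p-divisible subgroup (the convex subgroups form a chain, so the union of all
  convex p-divisible subgroups is the largest one).\<close>
definition max_convex_pdiv :: "nat \<Rightarrow> 'g::linordered_ab_group_add set \<Rightarrow> 'g set" where
  "max_convex_pdiv p G = \<Union>{D. convex_subgroup G D \<and> p_divisible p D}"

text \<open>Valuation ring of the coarsening v_Delta: a \<mapsto> v a + Delta.\<close>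
definition coarsening_ring ::
  "('a::field \<Rightarrow> 'g::linordered_ab_group_add) \<Rightarrow> 'g set \<Rightarrow> 'a set" where
  "coarsening_ring v D = {x. x = 0 \<or> 0 \<le> v x \<or> v x \<in> D}"

definition psi_p :: "nat \<Rightarrow> 'a::field \<Rightarrow> bool" where
  "psi_p p x \<longleftrightarrow> \<not> (\<exists>y. y ^ p = x \<or> y ^ p = - x) \<and> (\<exists>z. z ^ p = 1 + x)"

definition phi_p :: "nat \<Rightarrow> 'a::field \<Rightarrow> bool" where
  "phi_p p x \<longleftrightarrow> psi_p p x \<or>
     (\<exists>y. (y ^ p = x \<or> y ^ p = - x) \<and> (\<forall>z. psi_p p z \<longrightarrow> psi_p p (x * z))) \<or> x = 0"

end

(*
  A nonzero x is a p-th power up to sign iff v x is p-divisible in the value group: units are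
  p-th powers up to sign because the residue field is real closed and p is a unit (a henselian
  field with formally real residue field is formally real, so no integer lies in a maximal ideal
  of a henselian valuation ring). By Hensel's lemma 1 + x is a p-th power whenever v x > 0, while
  for v x < 0 it is one only if x is, since x = (1 + x)/(1 + 1/x). So psi_p defines the elements
  of positive value that are not p-divisible, and for x of p-divisible value, multiplication by x
  preserves psi_p iff v x + g > 0 for every positive non-p-divisible g in the value group. For
  v x < 0 that says every positive element up to -v x is p-divisible, i.e. the convex subgroup
  generated by v x is p-divisible, i.e. v x lies in the maximal convex p-divisible subgroup.
*)
theory Submission
  imports Defs "HOL-Computational_Algebra.Primes"
begin

section \<open>Valuation rings and Hensel's lemma\<close>

lemma valuation_ringD:
  assumes "is_valuation_ring R"
  shows valuation_ring_zero: "0 \<in> R"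
    and valuation_ring_one: "1 \<in> R"
    and valuation_ring_add: "x \<in> R \<Longrightarrow> y \<in> R \<Longrightarrow> x + y \<in> R"
    and valuation_ring_mult: "x \<in> R \<Longrightarrow> y \<in> R \<Longrightarrow> x * y \<in> R"
    and valuation_ring_uminus: "x \<in> R \<Longrightarrow> - x \<in> R"
    and valuation_ring_inverse: "x \<noteq> 0 \<Longrightarrow> x \<notin> R \<Longrightarrow> inverse x \<in> R"
  using assms unfolding is_valuation_ring_def by auto

lemma valuation_ring_power: "is_valuation_ring R \<Longrightarrow> x \<in> R \<Longrightarrow> x ^ n \<in> R"
  by (induction n) (auto intro: valuation_ringD)

lemma valuation_ring_of_nat: "is_valuation_ring R \<Longrightarrow> of_nat n \<in> R"
  by (induction n) (auto intro: valuation_ringD)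

lemma henselian_valuation_ring: "henselian R \<Longrightarrow> is_valuation_ring R"
  unfolding henselian_def by blast

lemma mem_max_ideal_iff: "x \<in> max_ideal R \<longleftrightarrow> x \<in> R \<and> (x = 0 \<or> inverse x \<notin> R)"
  unfolding max_ideal_def by auto

lemma max_ideal_subset: "max_ideal R \<subseteq> R"
  unfolding max_ideal_def by auto

lemma one_notin_max_ideal: "1 \<notin> max_ideal R"
  unfolding max_ideal_def by auto

lemma max_ideal_mult:
  assumes R: "is_valuation_ring R" and "r \<in> R" and x: "x \<in> max_ideal R"
  shows "r * x \<in> max_ideal R"
proof -
  have rx: "r * x \<in> R"
    using assms max_ideal_subset valuation_ring_mult by blast
  have "inverse (r * x) \<notin> R" if "r \<noteq> 0" "x \<noteq> 0"
  proof
    assume "inverse (r * x) \<in> R"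
    then have "r * inverse (r * x) \<in> R"
      using R \<open>r \<in> R\<close> valuation_ring_mult by blast
    moreover have "r * inverse (r * x) = inverse x"
      using that by (simp add: nonzero_inverse_mult_distrib mult.assoc[symmetric])
    ultimately show False
      using x that(2) by (metis mem_max_ideal_iff)
  qed
  with rx show ?thesis
    by (auto simp: mem_max_ideal_iff)
qed

lemma max_ideal_add:
  assumes R: "is_valuation_ring R" and x: "x \<in> max_ideal R" and y: "y \<in> max_ideal R"
  shows "x + y \<in> max_ideal R"
proof (cases "x = 0 \<or> y = 0")
  case True
  with x y show ?thesis by auto
next
  case False
  have sum: "(1 + a / b) * b = a + b" if "b \<noteq> 0" for a b :: 'a
    using that by (simp add: field_simps)
  have "y / x \<in> R \<or> x / y \<in> R"
    using False valuation_ring_inverse[OF R, of "y / x"] by auto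
  then show ?thesis
    using max_ideal_mult[OF R _ x, of "1 + y / x"] max_ideal_mult[OF R _ y, of "1 + x / y"]
      sum[of x y] sum[of y x] False valuation_ring_add[OF R valuation_ring_one[OF R]]
    by (metis add.commute)
qed

lemma max_ideal_uminus: "is_valuation_ring R \<Longrightarrow> x \<in> max_ideal R \<Longrightarrow> - x \<in> max_ideal R"
  using max_ideal_mult[of R "-1" x] by (simp add: valuation_ring_one valuation_ring_uminus)

lemma max_ideal_diff:
  "is_valuation_ring R \<Longrightarrow> x \<in> max_ideal R \<Longrightarrow> y \<in> max_ideal R \<Longrightarrow> x - y \<in> max_ideal R"
  using max_ideal_add max_ideal_uminus by (metis diff_conv_add_uminus)

lemma unit_mult:
  assumes R: "is_valuation_ring R" and "x \<in> R - max_ideal R" and "y \<in> R - max_ideal R"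
  shows "x * y \<in> R - max_ideal R"
proof -
  have "x \<noteq> 0" "inverse x \<in> R" "y \<noteq> 0" "inverse y \<in> R"
    using assms mem_max_ideal_iff by blast+
  then show ?thesis
    using assms valuation_ring_mult[OF R, of "inverse x" "inverse y"] valuation_ring_mult[OF R, of x y]
    by (simp add: mem_max_ideal_iff nonzero_inverse_mult_distrib mult.commute)
qed

lemma unit_power:
  assumes R: "is_valuation_ring R" and x: "x \<in> R - max_ideal R"
  shows "x ^ n \<in> R - max_ideal R"
proof (induction n)
  case 0
  show ?case using valuation_ring_one[OF R] one_notin_max_ideal by simp
next
  case (Suc n)
  show ?case using unit_mult[OF R x Suc.IH] by simp
qed

definition binom_poly :: "nat \<Rightarrow> 'a::comm_ring_1 \<Rightarrow> 'a poly" where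
  "binom_poly p c = monom 1 p - [:c:]"

lemma binom_poly:
  fixes c :: "'a::field"
  assumes "p \<ge> 1"
  shows degree_binom_poly: "degree (binom_poly p c) = p"
    and lead_coeff_binom_poly: "lead_coeff (binom_poly p c) = 1"
    and coeff_binom_poly: "coeff (binom_poly p c) i \<in> {0, 1, -c}"
    and poly_binom_poly: "poly (binom_poly p c) x = x ^ p - c"
    and poly_pderiv_binom_poly: "poly (pderiv (binom_poly p c)) x = of_nat p * x ^ (p - 1)"
proof -
  show deg: "degree (binom_poly p c) = p"
    using assms unfolding binom_poly_def diff_conv_add_uminus
    by (subst degree_add_eq_left) (auto simp: degree_monom_eq)
  show "lead_coeff (binom_poly p c) = 1"
    unfolding deg using assms by (cases p) (auto simp: binom_poly_def)
  show "coeff (binom_poly p c) i \<in> {0, 1, -c}"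
    using assms by (cases i) (auto simp: binom_poly_def)
qed (simp_all add: binom_poly_def poly_monom pderiv_diff pderiv_monom pderiv_pCons)

lemma coeff_binom_poly_mem:
  "is_valuation_ring R \<Longrightarrow> c \<in> R \<Longrightarrow> p \<ge> 1 \<Longrightarrow> coeff (binom_poly p c) i \<in> R"
  using coeff_binom_poly[of p c i] by (auto intro: valuation_ringD)

lemma henselian_nth_root:
  assumes H: "henselian R" and c: "c \<in> R" and a: "a \<in> R - max_ideal R"
    and "a ^ p - c \<in> max_ideal R" and p: "of_nat p \<notin> max_ideal R" "p \<ge> 1"
  shows "\<exists>b. b ^ p = c"
proof -
  have R: "is_valuation_ring R"
    using H henselian_valuation_ring by blast
  have "poly (pderiv (binom_poly p c)) a \<notin> max_ideal R"
    using unit_mult[OF R _ unit_power[OF R a]] p valuation_ring_of_nat[OF R, of p]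
    by (simp add: poly_pderiv_binom_poly)
  moreover have "poly (binom_poly p c) a \<in> max_ideal R"
    using assms(4) p by (simp add: poly_binom_poly)
  ultimately obtain b where "poly (binom_poly p c) b = 0"
    using H a coeff_binom_poly_mem[OF R c p(2)] lead_coeff_binom_poly[OF p(2)]
    unfolding henselian_def by blast
  then show ?thesis
    using p by (auto simp: poly_binom_poly)
qed

section \<open>Real closed residue fields\<close>

lemma residue_real_closed_sum_squares:
  fixes g :: "nat \<Rightarrow> 'a::field"
  assumes "residue_real_closed R" "\<forall>i<n. g i \<in> R" "(\<Sum>i<n. (g i)\<^sup>2) \<in> max_ideal R" "i < n"
  shows "g i \<in> max_ideal R"
proof -
  have "\<forall>n (g :: nat \<Rightarrow> 'a). (\<forall>i<n. g i \<in> R) \<longrightarrow> (\<Sum>i<n. (g i)\<^sup>2) \<in> max_ideal R \<longrightarrow>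
      (\<forall>i<n. g i \<in> max_ideal R)"
    using assms(1) unfolding residue_real_closed_def by blast
  then show ?thesis
    using assms(2-4) by blast
qed

lemma residue_real_closed_square:
  "residue_real_closed R \<Longrightarrow> x \<in> R \<Longrightarrow>
    \<exists>y\<in>R. y\<^sup>2 - x \<in> max_ideal R \<or> y\<^sup>2 + x \<in> max_ideal R"
  unfolding residue_real_closed_def by blast

lemma residue_real_closed_odd_degree:
  "residue_real_closed R \<Longrightarrow> \<forall>i. coeff f i \<in> R \<Longrightarrow> lead_coeff f = 1 \<Longrightarrow> odd (degree f) \<Longrightarrow>
    \<exists>a\<in>R. poly f a \<in> max_ideal R"
  unfolding residue_real_closed_def by blast

lemma valuation_ring_ex_divides_all:
  fixes S :: "'a::field set"
  assumes R: "is_valuation_ring R" and "finite S" "S \<noteq> {}" "0 \<notin> S"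
  shows "\<exists>s\<in>S. \<forall>t\<in>S. t / s \<in> R"
  using assms(2-4)
proof (induction S rule: finite_ne_induct)
  case (singleton x)
  then show ?case using valuation_ring_one[OF R] by simp
next
  case (insert x S)
  then obtain s where s: "s \<in> S" "\<forall>t\<in>S. t / s \<in> R" "s \<noteq> 0" "x \<noteq> 0"
    by auto
  show ?case
  proof (cases "x / s \<in> R")
    case True
    with s show ?thesis by auto
  next
    case False
    then have "s / x \<in> R"
      using valuation_ring_inverse[OF R, of "x / s"] s by simp
    have "t / x \<in> R" if "t \<in> S" for t
    proof -
      have "t / s * (s / x) \<in> R"
        using valuation_ring_mult[OF R s(2)[rule_format, OF that] \<open>s / x \<in> R\<close>] .
      moreover have "t / s * (s / x) = t / x"
        using s by simp
      ultimately show ?thesis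
        by metis
    qed
    then show ?thesis
      using s valuation_ring_one[OF R] by auto
  qed
qed

text \<open>Dividing by a term of least value scales the sum into \<open>R\<close> with one term equal to \<open>1\<close>, which
  contradicts formal reality of the residue field.\<close>
lemma sum_squares_eq_zero_imp_zero:
  fixes c :: "nat \<Rightarrow> 'a::field" and R :: "'a set"
  assumes R: "is_valuation_ring R" and rc: "residue_real_closed R"
    and sum: "(\<Sum>i<n. (c i)\<^sup>2) = 0" and "i < n"
  shows "c i = 0"
proof (rule ccontr)
  assume "c i \<noteq> 0"
  then obtain s where s: "s \<in> c ` {..<n} - {0}" "\<forall>t\<in>c ` {..<n} - {0}. t / s \<in> R"
    using valuation_ring_ex_divides_all[OF R, of "c ` {..<n} - {0}"] \<open>i < n\<close> by blast
  define g where "g j = c j / s" for j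
  have "\<forall>j<n. g j \<in> R"
    using s valuation_ring_zero[OF R] unfolding g_def by fastforce
  moreover have "(\<Sum>j<n. (g j)\<^sup>2) = (\<Sum>j<n. (c j)\<^sup>2) / s\<^sup>2"
    unfolding g_def by (simp add: sum_divide_distrib power_divide)
  then have "(\<Sum>j<n. (g j)\<^sup>2) \<in> max_ideal R"
    using sum valuation_ring_zero[OF R] by (simp add: mem_max_ideal_iff)
  ultimately have "\<forall>j<n. g j \<in> max_ideal R"
    using residue_real_closed_sum_squares[OF rc] by blast
  moreover obtain j where "j < n" "c j = s" "s \<noteq> 0"
    using s(1) by auto
  ultimately show False
    using one_notin_max_ideal unfolding g_def by force
qed

text \<open>If \<open>n\<close> lay in the maximal ideal, Hensel would lift the root \<open>0\<close> of \<open>X\<^sup>2 - X + n\<close> to a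
  root \<open>b\<close>, and then \<open>(4n - 1)\<cdot>1\<^sup>2 + (2b - 1)\<^sup>2 = 4(b\<^sup>2 - b + n) = 0\<close>.\<close>
lemma henselian_of_nat_notin_max_ideal:
  fixes Q R :: "'a::field set"
  assumes hQ: "henselian Q" and R: "is_valuation_ring R" and rc: "residue_real_closed R"
    and "n \<ge> 1"
  shows "of_nat n \<notin> max_ideal Q"
proof
  assume n: "of_nat n \<in> max_ideal Q"
  have Q: "is_valuation_ring Q"
    using hQ henselian_valuation_ring by blast
  define f :: "'a poly" where "f = [:of_nat n, -1, 1:]"
  have "\<forall>i. coeff f i \<in> Q"
    unfolding f_def using valuation_ringD[OF Q] valuation_ring_of_nat[OF Q]
    by (auto simp: coeff_pCons split: nat.splits)
  moreover have "poly f 0 \<in> max_ideal Q"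
    using n unfolding f_def by simp
  moreover have "poly (pderiv f) 0 \<notin> max_ideal Q"
    using max_ideal_uminus[OF Q, of "-1"] one_notin_max_ideal by (auto simp: f_def pderiv_pCons)
  ultimately obtain b where "poly f b = 0"
    using hQ valuation_ring_zero[OF Q] unfolding henselian_def by (force simp: f_def)
  then have b: "b\<^sup>2 - b + of_nat n = 0"
    unfolding f_def by (simp add: algebra_simps power2_eq_square)
  define m where "m = 4 * n - 1"
  define c :: "nat \<Rightarrow> 'a" where "c i = (if i < m then 1 else 2 * b - 1)" for i
  have "(\<Sum>i<Suc m. (c i)\<^sup>2) = of_nat m + (2 * b - 1)\<^sup>2"
    by (simp add: c_def)
  also have "\<dots> = 4 * (b\<^sup>2 - b + of_nat n)"
    using \<open>n \<ge> 1\<close> by (simp add: m_def algebra_simps power2_eq_square)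
  finally have "c 0 = 0"
    using sum_squares_eq_zero_imp_zero[OF R rc, of c "Suc m" 0] b by simp
  then show False
    using \<open>n \<ge> 1\<close> by (simp add: c_def m_def)
qed

lemma henselian_unit_pm_power:
  assumes H: "henselian R" and rc: "residue_real_closed R" and p: "p = 2 \<or> odd p"
    and u: "u \<in> R - max_ideal R"
  shows "\<exists>w. w ^ p = u \<or> w ^ p = - u"
proof -
  have R: "is_valuation_ring R"
    using H henselian_valuation_ring by blast
  have "p \<ge> 1"
    using p by presburger
  have p_unit: "of_nat p \<notin> max_ideal R"
    using henselian_of_nat_notin_max_ideal[OF H R rc \<open>p \<ge> 1\<close>] .
  have root: "\<exists>b. b ^ p = c"
    if c: "c \<in> R - max_ideal R" and a: "a \<in> R" "a ^ p - c \<in> max_ideal R" for a c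
  proof -
    have "a \<notin> max_ideal R"
    proof
      assume "a \<in> max_ideal R"
      then have "a ^ (p - 1) * a \<in> max_ideal R"
        using max_ideal_mult[OF R valuation_ring_power[OF R a(1)]] by blast
      then have "a ^ p \<in> max_ideal R"
        using power_minus_mult[of p a] \<open>p \<ge> 1\<close> by (metis less_le_trans zero_less_one)
      then have "a ^ p - (a ^ p - c) \<in> max_ideal R"
        using max_ideal_diff[OF R _ a(2)] by blast
      with c show False by simp
    qed
    with a c show ?thesis
      using henselian_nth_root[OF H _ _ a(2) p_unit \<open>p \<ge> 1\<close>] by blast
  qed
  have "-u \<in> R - max_ideal R"
    using u max_ideal_uminus[OF R, of "-u"] valuation_ring_uminus[OF R] by auto
  from p show ?thesis
  proof
    assume "p = 2"
    then obtain y where "y \<in> R" "y ^ p - u \<in> max_ideal R \<or> y ^ p - (-u) \<in> max_ideal R"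
      using residue_real_closed_square[OF rc] u by auto
    then show ?thesis
      using root[of u y] root[of "-u" y] u \<open>-u \<in> R - max_ideal R\<close> by blast
  next
    assume "odd p"
    moreover have "\<forall>i. coeff (binom_poly p u) i \<in> R"
      using coeff_binom_poly_mem[OF R _ \<open>p \<ge> 1\<close>] u by blast
    ultimately obtain a where "a \<in> R" "poly (binom_poly p u) a \<in> max_ideal R"
      using residue_real_closed_odd_degree[OF rc]
        degree_binom_poly[OF \<open>p \<ge> 1\<close>] lead_coeff_binom_poly[OF \<open>p \<ge> 1\<close>]
      by metis
    then show ?thesis
      using root[of u a] u by (auto simp: poly_binom_poly[OF \<open>p \<ge> 1\<close>])
  qed
qed

section \<open>Convex \<open>p\<close>-divisible subgroups\<close>

lemma nsmul_0 [simp]: "nsmul 0 b = 0"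
  unfolding nsmul_def by simp

lemma nsmul_Suc [simp]: "nsmul (Suc n) b = b + nsmul n b"
  unfolding nsmul_def by simp

lemma nsmul_add: "nsmul n (a + b) = nsmul n a + nsmul n (b :: 'g::ab_group_add)"
  by (induction n) (simp_all add: algebra_simps)

lemma nsmul_zero [simp]: "nsmul n (0 :: 'g::ab_group_add) = 0"
  by (induction n) simp_all

lemma nsmul_add_left: "nsmul (m + n) (a :: 'g::ab_group_add) = nsmul m a + nsmul n a"
  by (induction m) (simp_all add: algebra_simps)

lemma nsmul_uminus: "nsmul n (- a) = - nsmul n (a :: 'g::ab_group_add)"
  by (induction n) (simp_all add: algebra_simps)

lemma nsmul_nonneg: "0 \<le> b \<Longrightarrow> 0 \<le> nsmul n (b :: 'g::linordered_ab_group_add)"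
  by (induction n) simp_all

lemma nsmul_ge_self: "0 \<le> b \<Longrightarrow> n \<ge> 1 \<Longrightarrow> b \<le> nsmul n (b :: 'g::linordered_ab_group_add)"
  by (cases n) (auto intro: nsmul_nonneg)

lemma convex_subgroupD:
  assumes "convex_subgroup G D"
  shows convex_subgroup_subset: "D \<subseteq> G"
    and convex_subgroup_uminus: "a \<in> D \<Longrightarrow> - a \<in> D"
    and convex_subgroup_convex: "a \<in> D \<Longrightarrow> g \<in> G \<Longrightarrow> 0 \<le> g \<Longrightarrow> g \<le> a \<Longrightarrow> g \<in> D"
  using assms unfolding convex_subgroup_def by auto

definition p_multiple :: "nat \<Rightarrow> 'g::ab_group_add set \<Rightarrow> 'g \<Rightarrow> bool" where
  "p_multiple p G g \<longleftrightarrow> (\<exists>h\<in>G. nsmul p h = g)"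

lemma mem_max_convex_pdiv_iff:
  "a \<in> max_convex_pdiv p G \<longleftrightarrow> (\<exists>D. convex_subgroup G D \<and> p_divisible p D \<and> a \<in> D)"
  unfolding max_convex_pdiv_def by blast

lemma mem_max_convex_pdiv_imp_p_multiple:
  assumes "a \<in> max_convex_pdiv p G"
  shows "p_multiple p G a"
proof -
  obtain D where D: "convex_subgroup G D" "p_divisible p D" "a \<in> D"
    using assms mem_max_convex_pdiv_iff by blast
  then obtain b where "b \<in> D" "nsmul p b = a"
    unfolding p_divisible_def by blast
  with convex_subgroup_subset[OF D(1)] show ?thesis
    unfolding p_multiple_def by blast
qed

text \<open>For \<open>c \<ge> 0\<close> this is the smallest convex subgroup of \<open>G\<close> containing \<open>c\<close>.\<close>
definition arch_span :: "'g::linordered_ab_group_add set \<Rightarrow> 'g \<Rightarrow> 'g set" where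
  "arch_span G c = {g \<in> G. \<exists>n. g \<le> nsmul n c \<and> - g \<le> nsmul n c}"

locale ordered_subgroup =
  fixes G :: "'g::linordered_ab_group_add set"
  assumes zero_mem: "0 \<in> G"
    and add_mem: "a \<in> G \<Longrightarrow> b \<in> G \<Longrightarrow> a + b \<in> G"
    and uminus_mem: "a \<in> G \<Longrightarrow> - a \<in> G"
begin

lemma diff_mem: "a \<in> G \<Longrightarrow> b \<in> G \<Longrightarrow> a - b \<in> G"
  using add_mem[OF _ uminus_mem, of a b] by simp

lemma p_multiple_zero: "p_multiple p G 0"
  unfolding p_multiple_def using zero_mem by force

lemma p_multiple_add: "p_multiple p G a \<Longrightarrow> p_multiple p G b \<Longrightarrow> p_multiple p G (a + b)"
  unfolding p_multiple_def using add_mem nsmul_add by metis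

lemma p_multiple_uminus: "p_multiple p G a \<Longrightarrow> p_multiple p G (- a)"
  unfolding p_multiple_def using uminus_mem nsmul_uminus by metis

lemma p_multiple_diff: "p_multiple p G a \<Longrightarrow> p_multiple p G b \<Longrightarrow> p_multiple p G (a - b)"
  using p_multiple_add[of p a "- b"] p_multiple_uminus[of p b] by simp

lemma convex_subgroup_arch_span:
  assumes "0 \<le> c"
  shows "convex_subgroup G (arch_span G c)"
  unfolding convex_subgroup_def
proof (intro conjI ballI impI)
  have nonneg: "0 \<le> nsmul n c" for n
    using nsmul_nonneg[OF assms] .
  show "arch_span G c \<subseteq> G"
    unfolding arch_span_def by blast
  show "0 \<in> arch_span G c"
    unfolding arch_span_def using zero_mem nonneg by auto
  fix x y assume x: "x \<in> arch_span G c" and y: "y \<in> arch_span G c"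
  then obtain m n where "x \<le> nsmul m c" "- x \<le> nsmul m c" "y \<le> nsmul n c" "- y \<le> nsmul n c"
    unfolding arch_span_def by blast
  then have "x + y \<le> nsmul (m + n) c" "- (x + y) \<le> nsmul (m + n) c"
    using add_mono by (fastforce simp: nsmul_add_left)+
  with x y show "x + y \<in> arch_span G c"
    using add_mem unfolding arch_span_def by blast
  show "- x \<in> arch_span G c"
    using x uminus_mem unfolding arch_span_def by auto
next
  fix x g assume "x \<in> arch_span G c" "g \<in> G" "0 \<le> g \<and> g \<le> x"
  moreover from this obtain n where "x \<le> nsmul n c"
    unfolding arch_span_def by blast
  moreover have "- g \<le> nsmul n c"
    using \<open>0 \<le> g \<and> g \<le> x\<close> nsmul_nonneg[OF assms, of n] by (meson neg_le_0_iff_le order_trans)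
  ultimately show "g \<in> arch_span G c"
    unfolding arch_span_def by (blast intro: order_trans)
qed

lemma p_multiple_below_nsmul:
  assumes c: "c \<in> G" "0 < c" and below: "\<And>g. g \<in> G \<Longrightarrow> 0 < g \<Longrightarrow> g \<le> c \<Longrightarrow> p_multiple p G g"
  shows "g \<in> G \<Longrightarrow> 0 \<le> g \<Longrightarrow> g \<le> nsmul n c \<Longrightarrow> p_multiple p G g"
proof (induction n arbitrary: g)
  case 0
  then show ?case using p_multiple_zero by simp
next
  case (Suc n)
  show ?case
  proof (cases "g \<le> c")
    case True
    then show ?thesis
      using Suc.prems below p_multiple_zero by (cases "g = 0") auto
  next
    case False
    then have "p_multiple p G (g - c)"
      using Suc diff_mem[OF _ c(1)] by (simp add: algebra_simps)
    then show ?thesis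
      using p_multiple_add below[OF c order_refl] by fastforce
  qed
qed

lemma p_divisible_arch_span:
  assumes "p \<ge> 1" and c: "c \<in> G" "0 < c"
    and below: "\<And>g. g \<in> G \<Longrightarrow> 0 < g \<Longrightarrow> g \<le> c \<Longrightarrow> p_multiple p G g"
  shows "p_divisible p (arch_span G c)"
  unfolding p_divisible_def
proof
  fix x assume "x \<in> arch_span G c"
  then obtain n where n: "x \<le> nsmul n c" "- x \<le> nsmul n c" and "x \<in> G"
    unfolding arch_span_def by blast
  have "p_multiple p G x"
  proof (cases "0 \<le> x")
    case True
    then show ?thesis
      using p_multiple_below_nsmul[OF c below] n \<open>x \<in> G\<close> by blast
  next
    case False
    then have "p_multiple p G (- x)"
      using p_multiple_below_nsmul[OF c below] n uminus_mem[OF \<open>x \<in> G\<close>] by simp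
    then show ?thesis
      using p_multiple_uminus by fastforce
  qed
  then obtain b where b: "b \<in> G" "nsmul p b = x"
    unfolding p_multiple_def by blast
  have nonneg: "0 \<le> nsmul n c"
    using nsmul_nonneg[OF less_imp_le[OF c(2)]] .
  have "b \<le> nsmul n c \<and> - b \<le> nsmul n c"
  proof (cases "0 \<le> b")
    case True
    then have "b \<le> x"
      using nsmul_ge_self[OF True \<open>p \<ge> 1\<close>] b(2) by simp
    with True show ?thesis
      using n(1) nonneg by (meson neg_le_0_iff_le order_trans)
  next
    case False
    then have "- b \<le> - x"
      using nsmul_ge_self[of "- b" p] \<open>p \<ge> 1\<close> b(2) nsmul_uminus[of p b] by simp
    with False show ?thesis
      using n(2) nonneg by (meson le_cases neg_le_0_iff_le order_trans)
  qed
  with b show "\<exists>b\<in>arch_span G c. nsmul p b = x"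
    unfolding arch_span_def by blast
qed

lemma negative_mem_max_convex_pdiv_iff:
  assumes "p \<ge> 1" and a: "a \<in> G" "a < 0"
  shows "a \<in> max_convex_pdiv p G \<longleftrightarrow> (\<forall>g\<in>G. 0 < g \<and> g \<le> - a \<longrightarrow> p_multiple p G g)"
proof
  assume "a \<in> max_convex_pdiv p G"
  then obtain D where D: "convex_subgroup G D" "p_divisible p D" "a \<in> D"
    using mem_max_convex_pdiv_iff by blast
  have "g \<in> max_convex_pdiv p G" if "g \<in> G" "0 < g" "g \<le> - a" for g
  proof -
    have "g \<in> D"
      using convex_subgroup_convex[OF D(1) convex_subgroup_uminus[OF D(1) D(3)]] that by simp
    with D show ?thesis
      using mem_max_convex_pdiv_iff by blast
  qed
  then show "\<forall>g\<in>G. 0 < g \<and> g \<le> - a \<longrightarrow> p_multiple p G g"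
    using mem_max_convex_pdiv_imp_p_multiple by blast
next
  assume "\<forall>g\<in>G. 0 < g \<and> g \<le> - a \<longrightarrow> p_multiple p G g"
  then have "p_divisible p (arch_span G (- a))"
    using p_divisible_arch_span[OF \<open>p \<ge> 1\<close> uminus_mem[OF a(1)]] a(2) by simp
  moreover have span: "convex_subgroup G (arch_span G (- a))"
    using convex_subgroup_arch_span a(2) by simp
  moreover have "a \<in> arch_span G (- a)"
    using a(1) a(2) unfolding arch_span_def by (auto intro: exI[of _ 1])
  ultimately show "a \<in> max_convex_pdiv p G"
    using mem_max_convex_pdiv_iff by blast
qed

lemma nonneg_or_mem_max_convex_pdiv_iff:
  assumes "p \<ge> 1" and a: "a \<in> G"
  shows "0 \<le> a \<or> a \<in> max_convex_pdiv p G \<longleftrightarrow>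
    (\<forall>g\<in>G. 0 < g \<and> \<not> p_multiple p G g \<longrightarrow> 0 < a + g)"
proof (cases "0 \<le> a")
  case True
  then show ?thesis
    by (simp add: add_nonneg_pos)
next
  case False
  have "0 < a + g \<longleftrightarrow> \<not> g \<le> - a" for g
    using add_less_cancel_left[of "- a" 0 "a + g"] by (simp add: not_le)
  then show ?thesis
    using negative_mem_max_convex_pdiv_iff[OF \<open>p \<ge> 1\<close> a] False by auto
qed

end

section \<open>Valuations\<close>

context
  fixes v :: "'a::field \<Rightarrow> 'g::linordered_ab_group_add"
  assumes val: "valuation v"
begin

lemma valuation_mult: "x \<noteq> 0 \<Longrightarrow> y \<noteq> 0 \<Longrightarrow> v (x * y) = v x + v y"
  using val unfolding valuation_def by blast

lemma valuation_one: "v 1 = 0"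
  using valuation_mult[of 1 1] by simp

lemma valuation_inverse: "x \<noteq> 0 \<Longrightarrow> v (inverse x) = - v x"
  using valuation_mult[of x "inverse x"] valuation_one by (simp add: eq_neg_iff_add_eq_0 add.commute)

lemma valuation_uminus: "v (- x) = v x"
proof -
  have "v (-1) + v (-1) = 0"
    using valuation_mult[of "-1" "-1"] valuation_one by simp
  then have "v (-1) = 0"
    by simp
  then show ?thesis
    using valuation_mult[of "-1" x] by (cases "x = 0") simp_all
qed

lemma valuation_power: "x \<noteq> 0 \<Longrightarrow> v (x ^ n) = nsmul n (v x)"
  by (induction n) (simp_all add: valuation_one valuation_mult)

lemma value_group_mem: "x \<noteq> 0 \<Longrightarrow> v x \<in> value_group v"
  unfolding value_group_def by blast

lemma ordered_subgroup_value_group: "ordered_subgroup (value_group v)"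
proof
  show "0 \<in> value_group v"
    using value_group_mem[of 1] valuation_one by simp
next
  fix a b assume "a \<in> value_group v" "b \<in> value_group v"
  then obtain x y where "x \<noteq> 0" "y \<noteq> 0" "a = v x" "b = v y"
    unfolding value_group_def by blast
  then show "a + b \<in> value_group v"
    using valuation_mult[of x y] value_group_mem[of "x * y"] by simp
next
  fix a assume "a \<in> value_group v"
  then obtain x where "x \<noteq> 0" "a = v x"
    unfolding value_group_def by blast
  then show "- a \<in> value_group v"
    using valuation_inverse[of x] value_group_mem[of "inverse x"] by simp
qed

lemma mem_max_ideal_val_ring_iff: "x \<in> max_ideal (val_ring v) \<longleftrightarrow> x = 0 \<or> 0 < v x"
  by (cases "x = 0") (auto simp: mem_max_ideal_iff val_ring_def valuation_inverse)

end

section \<open>The definable valuation ring\<close>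

locale almost_real_closed_valuation =
  fixes v :: "'a::field \<Rightarrow> 'g::linordered_ab_group_add" and R :: "'a set" and p :: nat
  assumes valuation: "valuation v"
    and henselian_val_ring: "henselian (val_ring v)"
    and henselian_R: "henselian R"
    and residue_real_closed_R: "residue_real_closed R"
    and val_ring_subset: "val_ring v \<subseteq> R"
    and prime_p: "prime p"

sublocale almost_real_closed_valuation \<subseteq> ordered_subgroup "value_group v"
  using ordered_subgroup_value_group[OF valuation] .

context almost_real_closed_valuation
begin

lemma p_ge_1: "p \<ge> 1"
  using prime_p prime_ge_1_nat by blast

lemma pm_power_iff_p_multiple:
  assumes "x \<noteq> 0"
  shows "(\<exists>y. y ^ p = x \<or> y ^ p = - x) \<longleftrightarrow> p_multiple p (value_group v) (v x)"
proof
  assume "\<exists>y. y ^ p = x \<or> y ^ p = - x"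
  then obtain y where y: "y ^ p = x \<or> y ^ p = - x"
    by blast
  then have "y \<noteq> 0"
    using assms p_ge_1 by (auto simp: power_0_left)
  moreover have "v x = v (y ^ p)"
    using y valuation_uminus[OF valuation] by auto
  ultimately show "p_multiple p (value_group v) (v x)"
    unfolding p_multiple_def
    using value_group_mem[OF valuation] valuation_power[OF valuation] by metis
next
  assume "p_multiple p (value_group v) (v x)"
  then obtain a where a: "a \<noteq> 0" "nsmul p (v a) = v x"
    unfolding p_multiple_def value_group_def by blast
  define u where "u = x / a ^ p"
  have x_eq: "x = u * a ^ p" and "u \<noteq> 0"
    using a assms by (simp_all add: u_def)
  then have "v u = 0"
    using a valuation_mult[OF valuation, of u "a ^ p"] valuation_power[OF valuation a(1)] by simp
  then have "u \<in> R - max_ideal R"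
    using val_ring_subset valuation_inverse[OF valuation \<open>u \<noteq> 0\<close>] \<open>u \<noteq> 0\<close>
    by (auto simp: mem_max_ideal_iff val_ring_def)
  then obtain w where "w ^ p = u \<or> w ^ p = - u"
    using henselian_unit_pm_power[OF henselian_R residue_real_closed_R] prime_p prime_odd_nat
    by (metis prime_ge_2_nat le_neq_implies_less)
  then have "(a * w) ^ p = x \<or> (a * w) ^ p = - x"
    using x_eq by (auto simp: power_mult_distrib mult.commute)
  then show "\<exists>y. y ^ p = x \<or> y ^ p = - x"
    by blast
qed

lemma pth_root_one_plus:
  assumes "0 < v x"
  shows "\<exists>z. z ^ p = 1 + x"
proof -
  have O: "is_valuation_ring (val_ring v)"
    using henselian_val_ring henselian_valuation_ring by blast
  have x: "x \<in> max_ideal (val_ring v)"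
    using assms mem_max_ideal_val_ring_iff[OF valuation] by simp
  have "1 + x \<in> val_ring v"
    using valuation_ring_add[OF O valuation_ring_one[OF O]] x max_ideal_subset by blast
  moreover have "1 ^ p - (1 + x) \<in> max_ideal (val_ring v)"
    using max_ideal_uminus[OF O x] by simp
  moreover have "1 \<in> val_ring v - max_ideal (val_ring v)"
    using valuation_ring_one[OF O] one_notin_max_ideal by blast
  ultimately show ?thesis
    using henselian_nth_root[OF henselian_val_ring _ _ _ _ p_ge_1]
      henselian_of_nat_notin_max_ideal[OF henselian_val_ring
        henselian_valuation_ring[OF henselian_R] residue_real_closed_R p_ge_1]
    by blast
qed

lemma psi_p_iff:
  "psi_p p x \<longleftrightarrow> x \<noteq> 0 \<and> 0 < v x \<and> \<not> p_multiple p (value_group v) (v x)"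
proof
  assume psi: "psi_p p x"
  then have no_root: "\<not> (\<exists>y. y ^ p = x \<or> y ^ p = - x)" and "\<exists>z. z ^ p = 1 + x"
    unfolding psi_p_def by blast+
  have "x \<noteq> 0"
    using no_root p_ge_1 by (metis power_0_left not_one_le_zero)
  then have not_multiple: "\<not> p_multiple p (value_group v) (v x)"
    using no_root pm_power_iff_p_multiple by blast
  have "0 < v x"
  proof (rule ccontr)
    assume "\<not> 0 < v x"
    moreover have "v x \<noteq> 0"
      using not_multiple p_multiple_zero by auto
    ultimately have "0 < v (inverse x)"
      using valuation_inverse[OF valuation \<open>x \<noteq> 0\<close>] by simp
    then obtain w where w: "w ^ p = 1 + inverse x"
      using pth_root_one_plus by blast
    obtain z where z: "z ^ p = 1 + x"
      using \<open>\<exists>z. z ^ p = 1 + x\<close> by blast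
    have "1 + inverse x \<noteq> 0"
      using \<open>0 < v (inverse x)\<close> valuation_uminus[OF valuation, of 1] valuation_one[OF valuation]
      by (metis add_eq_0_iff less_irrefl)
    moreover have "1 + x = x * (1 + inverse x)"
      using \<open>x \<noteq> 0\<close> by (simp add: field_simps)
    ultimately have "(z / w) ^ p = x"
      using z w by (simp add: power_divide)
    with no_root show False
      by blast
  qed
  with \<open>x \<noteq> 0\<close> not_multiple show "x \<noteq> 0 \<and> 0 < v x \<and> \<not> p_multiple p (value_group v) (v x)"
    by blast
next
  assume "x \<noteq> 0 \<and> 0 < v x \<and> \<not> p_multiple p (value_group v) (v x)"
  then show "psi_p p x"
    unfolding psi_p_def using pm_power_iff_p_multiple pth_root_one_plus by blast
qed

lemma mult_preserves_psi_p_iff: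
  assumes "x \<noteq> 0" and x: "p_multiple p (value_group v) (v x)"
  shows "(\<forall>z. psi_p p z \<longrightarrow> psi_p p (x * z)) \<longleftrightarrow>
    (\<forall>g\<in>value_group v. 0 < g \<and> \<not> p_multiple p (value_group v) g \<longrightarrow> 0 < v x + g)"
proof
  assume psi: "\<forall>z. psi_p p z \<longrightarrow> psi_p p (x * z)"
  show "\<forall>g\<in>value_group v. 0 < g \<and> \<not> p_multiple p (value_group v) g \<longrightarrow> 0 < v x + g"
  proof (intro ballI impI)
    fix g assume "g \<in> value_group v" and g: "0 < g \<and> \<not> p_multiple p (value_group v) g"
    then obtain z where z: "z \<noteq> 0" "g = v z"
      unfolding value_group_def by blast
    then have "psi_p p (x * z)"
      using psi g psi_p_iff by blast
    then show "0 < v x + g"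
      using psi_p_iff valuation_mult[OF valuation \<open>x \<noteq> 0\<close> z(1)] z(2) by simp
  qed
next
  assume pos: "\<forall>g\<in>value_group v. 0 < g \<and> \<not> p_multiple p (value_group v) g \<longrightarrow> 0 < v x + g"
  show "\<forall>z. psi_p p z \<longrightarrow> psi_p p (x * z)"
  proof (intro allI impI)
    fix z :: 'a assume "psi_p p z"
    then have z: "z \<noteq> 0" "0 < v z" "\<not> p_multiple p (value_group v) (v z)"
      using psi_p_iff by blast+
    have vxz: "v (x * z) = v x + v z"
      using valuation_mult[OF valuation \<open>x \<noteq> 0\<close> z(1)] .
    have "\<not> p_multiple p (value_group v) (v (x * z))"
      using p_multiple_diff[OF _ x, of "v (x * z)"] z(3) vxz by auto
    then show "psi_p p (x * z)"
      using psi_p_iff pos value_group_mem[OF valuation z(1)] z \<open>x \<noteq> 0\<close> vxz by simp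
  qed
qed

lemma phi_p_iff:
  "phi_p p x \<longleftrightarrow> x = 0 \<or> 0 \<le> v x \<or> v x \<in> max_convex_pdiv p (value_group v)"
proof (cases "x = 0")
  case True
  then show ?thesis
    unfolding phi_p_def by simp
next
  case False
  show ?thesis
  proof (cases "p_multiple p (value_group v) (v x)")
    case True
    have "\<not> psi_p p x" "\<exists>y. y ^ p = x \<or> y ^ p = - x"
      using psi_p_iff pm_power_iff_p_multiple[OF False] True by simp_all
    with False have "phi_p p x \<longleftrightarrow> (\<forall>z. psi_p p z \<longrightarrow> psi_p p (x * z))"
      unfolding phi_p_def by blast
    then show ?thesis
      using mult_preserves_psi_p_iff[OF False True] False
        nonneg_or_mem_max_convex_pdiv_iff[OF p_ge_1 value_group_mem[OF valuation False]]
      by simp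
  next
    case not_multiple: False
    have "\<not> (\<exists>y. y ^ p = x \<or> y ^ p = - x)"
      using pm_power_iff_p_multiple[OF False] not_multiple by simp
    with False have "phi_p p x \<longleftrightarrow> psi_p p x"
      unfolding phi_p_def by blast
    moreover have "v x \<notin> max_convex_pdiv p (value_group v)" "v x \<noteq> 0"
      using not_multiple mem_max_convex_pdiv_imp_p_multiple p_multiple_zero by auto
    ultimately show ?thesis
      using False not_multiple by (auto simp: psi_p_iff)
  qed
qed

end

theorem proposition1p5:
  fixes v :: "'a::field \<Rightarrow> 'g::linordered_ab_group_add" and p :: nat
  assumes "almost_real_closed TYPE('a)"
    and "valuation v"
    and "canonical_henselian_ring (val_ring v)"
    and "prime p"
  shows "{x::'a. phi_p p x} = coarsening_ring v (max_convex_pdiv p (value_group v))"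
proof -
  obtain R :: "'a set" where "henselian R" "residue_real_closed R"
    using assms(1) unfolding almost_real_closed_def by blast
  with assms interpret almost_real_closed_valuation v R p
    by unfold_locales (auto simp: canonical_henselian_ring_def)
  show ?thesis
    by (auto simp: phi_p_iff coarsening_ring_def)
qed

end
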